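(* Assume the standing hypotheses (S) with $\lambda\ge0$ hold for two time steps $\tau,\eta>0$ (with initial data $X_0^\tau,X_0^\eta\in\mathbb H$ and corresponding scheme iterates). Then for every $t\ge0$, \[d^2_{\tau,\eta}(t;t)\le\|X_0^\tau-X_0^\eta\|^2_{\mathbb H}+\frac74\Big(\tau^2\|\nabla\phi^{\#}_{\rho_0}(X_0^\tau)\|^2_{\mathbb H}+\eta^2\|\nabla\phi^{\#}_{\rho_0}(X_0^\eta)\|^2_{\mathbb H}\Big).\]
   Context: Interpolations: for a time step $\tau$ and $t\in[n\tau,(n+1)\tau)$ set $\ell_\tau(t):=(t-n\tau)/\tau$, $\underline X_t^\tau:=X_n^\tau$, $\overline X_t^\tau:=X_{n+1}^\tau$; for $\xi\in\mathbb H$, $d^2_\tau(t;\xi):=(1-\ell_\tau(t))\|\xi-\underline X_t^\tau\|^2_{\mathbb H}+\ell_\tau(t)\|\xi-\overline X_t^\tau\|^2_{\mathbb H}$; and $d^2_{\tau,\eta}(t;t):=(1-\ell_\eta(t))\,d^2_\tau(t;\underline X_t^\eta)+\ell_\eta(t)\,d^2_\tau(t;\overline X_t^\eta)$. Standing hypotheses (S): $\rho_0\in\mathcal P_2(\mathbb R^d)$; $\mathbb H=L^2(\mathbb R^d;\rho_0)$ is the Hilbert space of $\rho_0$-square-integrable maps $\mathbb R^d\to\mathbb R^d$ with $\langle\xi_1,\xi_2\rangle_{\mathbb H}=\int\langle\xi_1,\xi_2\rangle d\rho_0$; $\phi:\mathcal P_2(\mathbb R^d)\to\mathbb R$ has lift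 $\phi^{\#}_{\rho_0}(\xi):=\phi(\xi_{\#}\rho_0)$ which is Fréchet differentiable on $\mathbb H$ (gradient $\nabla\phi^{\#}_{\rho_0}$), $\lambda$-convex on $\mathbb H$ for some $\lambda\in\mathbb R$ (i.e. $\phi^{\#}_{\rho_0}((1-t)\xi_1+t\xi_2)\le(1-t)\phi^{\#}_{\rho_0}(\xi_1)+t\phi^{\#}_{\rho_0}(\xi_2)-\frac\lambda2t(1-t)\|\xi_1-\xi_2\|_{\mathbb H}^2$), and $\inf_{\mathbb H}\phi^{\#}_{\rho_0}>-\infty$; the time step $\tau>0$ satisfies $\lambda/2+1/\tau>0$; $X_0^\tau\in\mathbb H$. Lagrangian trapezoidal scheme: $X_{n+1}^\tau$ is the (unique) minimizer over $\xi\in\mathbb H$ of $\tfrac12\phi^{\#}_{\rho_0}(\xi)+\tfrac12\langle\nabla\phi^{\#}_{\rho_0}(X_n^\tau),\xi\rangle_{\mathbb H}+\tfrac1{2\tau}\|\xi-X_n^\tau\|^2_{\mathbb H}$; equivalently $X_{n+1}^\tau=X_n^\tau-\frac\tau2\big(\nabla\phi^{\#}_{\rho_0}(X_{n+1}^\tau)+\nabla\phi^{\#}_{\rho_0}(X_n^\tau)\big)$. *)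

theory Defs
  imports "HOL-Probability.Probability"
begin

definition P2 :: "('a::euclidean_space) measure set" where
  "P2 = {\<mu>. prob_space \<mu> \<and> sets \<mu> = sets borel \<and> integrable \<mu> (\<lambda>x. (norm x)^2)}"

text \<open>The Hilbert space H = L^2(R^d; rho0) of rho0-square-integrable maps
  (represented by functions; all quantities below are invariant under
  rho0-a.e. equality).\<close>
definition L2H :: "'a measure \<Rightarrow> ('a \<Rightarrow> 'b::euclidean_space) set" where
  "L2H M = {\<xi>. \<xi> \<in> borel_measurable M \<and> integrable M (\<lambda>x. (norm (\<xi> x))^2)}"

definition innerH :: "'a measure \<Rightarrow> ('a \<Rightarrow> 'b::euclidean_space) \<Rightarrow> ('a \<Rightarrow> 'b) \<Rightarrow> real" where
  "innerH M \<xi> \<zeta> = (LINT x|M. inner (\<xi> x) (\<zeta> x))"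

definition normH :: "'a measure \<Rightarrow> ('a \<Rightarrow> 'b::euclidean_space) \<Rightarrow> real" where
  "normH M \<xi> = sqrt (LINT x|M. (norm (\<xi> x))^2)"

definition distH :: "'a measure \<Rightarrow> ('a \<Rightarrow> 'b::euclidean_space) \<Rightarrow> ('a \<Rightarrow> 'b) \<Rightarrow> real" where
  "distH M \<xi> \<zeta> = normH M (\<lambda>x. \<xi> x - \<zeta> x)"

definition lift :: "('a::euclidean_space measure \<Rightarrow> real) \<Rightarrow> 'a measure \<Rightarrow> ('a \<Rightarrow> 'a) \<Rightarrow> real" where
  "lift \<phi> \<rho>0 \<xi> = \<phi> (distr \<rho>0 borel \<xi>)"

definition frechet_gradH :: "'a measure \<Rightarrow> (('a \<Rightarrow> 'b::euclidean_space) \<Rightarrow> real)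
    \<Rightarrow> (('a \<Rightarrow> 'b) \<Rightarrow> ('a \<Rightarrow> 'b)) \<Rightarrow> bool" where
  "frechet_gradH M F G \<longleftrightarrow>
     (\<forall>\<xi>\<in>L2H M. G \<xi> \<in> L2H M \<and>
        (\<forall>\<epsilon>>0. \<exists>\<delta>>0. \<forall>\<zeta>\<in>L2H M. distH M \<zeta> \<xi> < \<delta> \<longrightarrow>
            \<bar>F \<zeta> - F \<xi> - innerH M (G \<xi>) (\<lambda>x. \<zeta> x - \<xi> x)\<bar> \<le> \<epsilon> * distH M \<zeta> \<xi>))"

definition lambda_convexH :: "'a measure \<Rightarrow> real \<Rightarrow> (('a \<Rightarrow> 'b::euclidean_space) \<Rightarrow> real) \<Rightarrow> bool" where
  "lambda_convexH M lam F \<longleftrightarrow>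
     (\<forall>\<xi>1\<in>L2H M. \<forall>\<xi>2\<in>L2H M. \<forall>t\<in>{0..1::real}.
        F (\<lambda>x. (1 - t) *\<^sub>R \<xi>1 x + t *\<^sub>R \<xi>2 x)
          \<le> (1 - t) * F \<xi>1 + t * F \<xi>2 - lam / 2 * t * (1 - t) * (distH M \<xi>1 \<xi>2)^2)"

definition trap_scheme :: "'a measure \<Rightarrow> (('a \<Rightarrow> 'b::euclidean_space) \<Rightarrow> real)
    \<Rightarrow> (('a \<Rightarrow> 'b) \<Rightarrow> ('a \<Rightarrow> 'b)) \<Rightarrow> real \<Rightarrow> (nat \<Rightarrow> 'a \<Rightarrow> 'b) \<Rightarrow> bool" where
  "trap_scheme M F G \<tau> X \<longleftrightarrow>
     X 0 \<in> L2H M \<and>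
     (\<forall>n. X (Suc n) \<in> L2H M \<and>
        (\<forall>\<xi>\<in>L2H M.
           F (X (Suc n)) / 2 + innerH M (G (X n)) (X (Suc n)) / 2 + (distH M (X (Suc n)) (X n))^2 / (2 * \<tau>)
           \<le> F \<xi> / 2 + innerH M (G (X n)) \<xi> / 2 + (distH M \<xi> (X n))^2 / (2 * \<tau>)))"

definition stepidx :: "real \<Rightarrow> real \<Rightarrow> nat" where
  "stepidx \<tau> t = nat \<lfloor>t / \<tau>\<rfloor>"

definition ell :: "real \<Rightarrow> real \<Rightarrow> real" where
  "ell \<tau> t = (t - real (stepidx \<tau> t) * \<tau>) / \<tau>"

definition lowerX :: "(nat \<Rightarrow> 'c) \<Rightarrow> real \<Rightarrow> real \<Rightarrow> 'c" where
  "lowerX X \<tau> t = X (stepidx \<tau> t)"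

definition upperX :: "(nat \<Rightarrow> 'c) \<Rightarrow> real \<Rightarrow> real \<Rightarrow> 'c" where
  "upperX X \<tau> t = X (Suc (stepidx \<tau> t))"

definition d2 :: "'a measure \<Rightarrow> (nat \<Rightarrow> 'a \<Rightarrow> 'b::euclidean_space) \<Rightarrow> real \<Rightarrow> real \<Rightarrow> ('a \<Rightarrow> 'b) \<Rightarrow> real" where
  "d2 M X \<tau> t \<xi> = (1 - ell \<tau> t) * (distH M \<xi> (lowerX X \<tau> t))^2
                   + ell \<tau> t * (distH M \<xi> (upperX X \<tau> t))^2"

definition d2_two :: "'a measure \<Rightarrow> (nat \<Rightarrow> 'a \<Rightarrow> 'b::euclidean_space) \<Rightarrow> real
    \<Rightarrow> (nat \<Rightarrow> 'a \<Rightarrow> 'b) \<Rightarrow> real \<Rightarrow> real \<Rightarrow> real" where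
  "d2_two M X \<tau> Y \<eta> t = (1 - ell \<eta> t) * d2 M X \<tau> t (lowerX Y \<eta> t)
                          + ell \<eta> t * d2 M X \<tau> t (upperX Y \<eta> t)"

end

theory Submission
  imports Defs
begin

text \<open>
  Write x_n, y_m for the iterates with steps \<tau>, \<eta>. Testing the optimality condition of the
  scheme, x_n - x_(n+1) = \<tau>/2 (\<nabla>\<phi>(x_(n+1)) + \<nabla>\<phi>(x_n)), against suitable vectors and using
  the gradient inequality of the convex lift gives the discrete evolution variational inequality
    |\<xi> - x_(n+1)|^2 - |\<xi> - x_n|^2
      \<le> \<tau> (2 \<phi>(\<xi>) - \<phi>(x_n) - \<phi>(x_(n+1))) - \<tau>^2/4 (|\<nabla>\<phi>(x_(n+1))|^2 - |\<nabla>\<phi>(x_n)|^2),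
  the decay of |\<nabla>\<phi>(x_n)|^2 and \<phi>(x_n) - \<phi>(x_(n+1)) \<le> \<tau> |\<nabla>\<phi>(x_n)|^2. Applied with
  \<xi> = y_m, and symmetrically, the inequality controls the grid c(n,m) = |y_m - x_n|^2 in both
  directions. Hence along the diagonal s \<mapsto> (s/\<tau>, s/\<eta>) the bilinear interpolant of c, corrected
  by a quadratic in the local time variables, is nonincreasing in every cell and continuous
  from cell to cell, so it stays below c(0,0). The correction is at most
  (\<tau>^2 |\<nabla>\<phi>(x_0)|^2 + \<eta>^2 |\<nabla>\<phi>(y_0)|^2)/2.
\<close>

section \<open>The inner product on L2H\<close>

lemma L2H_inner_integrable:
  assumes "a \<in> L2H M" "b \<in> L2H M"
  shows "integrable M (\<lambda>x. inner (a x) (b x))"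
proof (rule Bochner_Integration.integrable_bound)
  show "integrable M (\<lambda>x. (norm (a x))^2 + (norm (b x))^2)"
    using assms by (auto simp: L2H_def)
  show "(\<lambda>x. inner (a x) (b x)) \<in> borel_measurable M"
    using assms by (auto simp: L2H_def)
  have "\<bar>inner (a x) (b x)\<bar> \<le> (norm (a x))^2 + (norm (b x))^2" for x
  proof -
    have "\<bar>inner (a x) (b x)\<bar> \<le> norm (a x) * norm (b x)" by (rule Cauchy_Schwarz_ineq2)
    also have "\<dots> \<le> (norm (a x))^2 + (norm (b x))^2"
      using sum_squares_bound[of "norm (a x)" "norm (b x)"]
        mult_nonneg_nonneg[OF norm_ge_zero norm_ge_zero, of "a x" "b x"] by linarith
    finally show ?thesis .
  qed
  then show "AE x in M. norm (inner (a x) (b x)) \<le> norm ((norm (a x))^2 + (norm (b x))^2)"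
    by simp
qed

lemma L2H_add [simp, intro]:
  assumes "a \<in> L2H M" "b \<in> L2H M"
  shows "(\<lambda>x. a x + b x) \<in> L2H M"
proof -
  have "(\<lambda>x. (norm (a x + b x))^2) = (\<lambda>x. inner (a x) (a x) + 2 * inner (a x) (b x) + inner (b x) (b x))"
    by (auto simp: power2_norm_eq_inner inner_add_left inner_add_right inner_commute)
  moreover have "integrable M \<dots>"
    using assms by (intro Bochner_Integration.integrable_add integrable_mult_right L2H_inner_integrable)
  ultimately show ?thesis
    using assms unfolding L2H_def by auto
qed

lemma L2H_scaleR [simp, intro]:
  assumes "a \<in> L2H M"
  shows "(\<lambda>x. r *\<^sub>R a x) \<in> L2H M"
proof -
  have "(\<lambda>x. (norm (r *\<^sub>R a x))^2) = (\<lambda>x. r^2 * (norm (a x))^2)"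
    by (auto simp: power_mult_distrib)
  then show ?thesis
    using assms unfolding L2H_def by auto
qed

lemma L2H_diff [simp, intro]:
  assumes "a \<in> L2H M" "b \<in> L2H M"
  shows "(\<lambda>x. a x - b x) \<in> L2H M"
  using L2H_add[OF assms(1) L2H_scaleR[OF assms(2), of "-1"]] by simp

lemma innerH_commute: "innerH M a b = innerH M b a"
  unfolding innerH_def by (simp add: inner_commute)

lemma innerH_add_left [simp]:
  "a \<in> L2H M \<Longrightarrow> b \<in> L2H M \<Longrightarrow> c \<in> L2H M \<Longrightarrow>
    innerH M (\<lambda>x. a x + b x) c = innerH M a c + innerH M b c"
  unfolding innerH_def by (simp add: inner_add_left L2H_inner_integrable)

lemma innerH_add_right [simp]:
  "a \<in> L2H M \<Longrightarrow> b \<in> L2H M \<Longrightarrow> c \<in> L2H M \<Longrightarrow>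
    innerH M c (\<lambda>x. a x + b x) = innerH M c a + innerH M c b"
  unfolding innerH_def by (simp add: inner_add_right L2H_inner_integrable)

lemma innerH_diff_left [simp]:
  "a \<in> L2H M \<Longrightarrow> b \<in> L2H M \<Longrightarrow> c \<in> L2H M \<Longrightarrow>
    innerH M (\<lambda>x. a x - b x) c = innerH M a c - innerH M b c"
  unfolding innerH_def by (simp add: inner_diff_left L2H_inner_integrable)

lemma innerH_diff_right [simp]:
  "a \<in> L2H M \<Longrightarrow> b \<in> L2H M \<Longrightarrow> c \<in> L2H M \<Longrightarrow>
    innerH M c (\<lambda>x. a x - b x) = innerH M c a - innerH M c b"
  unfolding innerH_def by (simp add: inner_diff_right L2H_inner_integrable)

lemma innerH_scaleR_left [simp]: "innerH M (\<lambda>x. r *\<^sub>R a x) c = r * innerH M a c"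
  unfolding innerH_def by simp

lemma innerH_scaleR_right [simp]: "innerH M c (\<lambda>x. r *\<^sub>R a x) = r * innerH M c a"
  unfolding innerH_def by simp

lemma innerH_self_nonneg: "0 \<le> innerH M a a"
  unfolding innerH_def by simp

lemma normH_nonneg: "0 \<le> normH M a"
  unfolding normH_def by simp

lemma normH_power2: "(normH M a)^2 = innerH M a a"
  unfolding normH_def innerH_def by (simp add: power2_norm_eq_inner)

lemma distH_power2: "(distH M a b)^2 = innerH M (\<lambda>x. a x - b x) (\<lambda>x. a x - b x)"
  unfolding distH_def by (rule normH_power2)

lemma distH_commute: "distH M a b = distH M b a"
  unfolding distH_def normH_def by (simp add: norm_minus_commute)

lemma normH_scaleR: "normH M (\<lambda>x. r *\<^sub>R a x) = \<bar>r\<bar> * normH M a"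
  unfolding normH_def by (simp add: power_mult_distrib real_sqrt_mult)

text \<open>Elements of L2H are functions rather than a.e.-classes, so innerH M v v = 0 does
  not give v = 0; this is the substitute.\<close>

lemma innerH_eq_0_if_self_eq_0:
  assumes "innerH M v v = 0" "v \<in> L2H M" "w \<in> L2H M"
  shows "innerH M v w = 0"
proof -
  define p where "p = innerH M v w"
  define q where "q = innerH M w w"
  define r where "r = - p / (q + 1)"
  have q: "0 \<le> q" unfolding q_def by (rule innerH_self_nonneg)
  then have rq: "r * (q + 1) = - p" unfolding r_def by simp
  have "0 \<le> innerH M (\<lambda>x. v x + r *\<^sub>R w x) (\<lambda>x. v x + r *\<^sub>R w x)"
    by (rule innerH_self_nonneg)
  also have "\<dots> = 2 * r * p + r^2 * q"
    using assms unfolding p_def q_def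
    by (simp add: innerH_commute[of M w v]) (simp add: power2_eq_square algebra_simps)
  finally have "0 \<le> (2 * r * p + r^2 * q) * (q + 1)^2" by simp
  also have "\<dots> = 2 * p * (r * (q + 1)) * (q + 1) + (r * (q + 1))^2 * q"
    by (simp add: power2_eq_square algebra_simps)
  also have "\<dots> = - (p^2 * (q + 2))"
    unfolding rq by (simp add: power2_eq_square algebra_simps)
  finally have "p^2 * (q + 2) \<le> 0" by simp
  then show ?thesis
    using q unfolding p_def by (simp add: mult_le_0_iff)
qed

section \<open>Convexity and Frechet gradients\<close>

lemma frechet_gradH_L2H: "frechet_gradH M F G \<Longrightarrow> \<xi> \<in> L2H M \<Longrightarrow> G \<xi> \<in> L2H M"
  unfolding frechet_gradH_def by auto

lemma frechet_gradH_along_line: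
  assumes fg: "frechet_gradH M F G" and \<xi>: "\<xi> \<in> L2H M" and h: "h \<in> L2H M"
    and "\<epsilon> > 0" and "s\<^sub>0 > 0"
  obtains s where "0 < s" "s \<le> s\<^sub>0"
    "\<bar>F (\<lambda>x. \<xi> x + s *\<^sub>R h x) - F \<xi> - s * innerH M (G \<xi>) h\<bar> \<le> s * \<epsilon>"
proof -
  define nh where "nh = normH M h"
  have nh: "0 \<le> nh" unfolding nh_def by (rule normH_nonneg)
  obtain \<delta> where "\<delta> > 0" and \<delta>: "\<And>\<zeta>. \<zeta> \<in> L2H M \<Longrightarrow> distH M \<zeta> \<xi> < \<delta> \<Longrightarrow>
      \<bar>F \<zeta> - F \<xi> - innerH M (G \<xi>) (\<lambda>x. \<zeta> x - \<xi> x)\<bar> \<le> \<epsilon> / (nh + 1) * distH M \<zeta> \<xi>"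
    using fg \<xi> \<open>\<epsilon> > 0\<close> nh unfolding frechet_gradH_def by (metis add_nonneg_pos zero_less_divide_iff zero_less_one)
  define s where "s = min s\<^sub>0 (\<delta> / (nh + 1))"
  have s: "0 < s" "s \<le> s\<^sub>0" using \<open>\<delta> > 0\<close> \<open>s\<^sub>0 > 0\<close> nh unfolding s_def by auto
  have step: "(\<lambda>x. \<xi> x + s *\<^sub>R h x - \<xi> x) = (\<lambda>x. s *\<^sub>R h x)" by simp
  have dist: "distH M (\<lambda>x. \<xi> x + s *\<^sub>R h x) \<xi> = s * nh"
    unfolding distH_def step normH_scaleR nh_def using s by simp
  have "s * nh \<le> \<delta> / (nh + 1) * nh" using s nh unfolding s_def by (intro mult_right_mono) auto
  also have "\<dots> < \<delta>" using \<open>\<delta> > 0\<close> nh by (simp add: field_simps)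
  finally have "\<bar>F (\<lambda>x. \<xi> x + s *\<^sub>R h x) - F \<xi> - s * innerH M (G \<xi>) h\<bar> \<le> \<epsilon> / (nh + 1) * (s * nh)"
    using \<delta>[of "\<lambda>x. \<xi> x + s *\<^sub>R h x"] \<xi> h dist by (simp add: step)
  also have "\<dots> \<le> s * \<epsilon>"
    using s nh \<open>\<epsilon> > 0\<close> by (simp add: field_simps)
  finally show ?thesis using that s by blast
qed

lemma lambda_convexH_gradient_ineq:
  assumes fg: "frechet_gradH M F G" and cv: "lambda_convexH M lam F" and "lam \<ge> 0"
    and \<xi>: "\<xi> \<in> L2H M" and \<zeta>: "\<zeta> \<in> L2H M"
  shows "F \<xi> + innerH M (G \<xi>) \<zeta> - innerH M (G \<xi>) \<xi> \<le> F \<zeta>"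
proof (rule field_le_epsilon)
  fix \<epsilon> :: real assume "\<epsilon> > 0"
  define h where "h = (\<lambda>x. \<zeta> x - \<xi> x)"
  have h: "h \<in> L2H M" unfolding h_def using \<xi> \<zeta> by simp
  obtain s where s: "0 < s" "s \<le> 1"
    and lin: "\<bar>F (\<lambda>x. \<xi> x + s *\<^sub>R h x) - F \<xi> - s * innerH M (G \<xi>) h\<bar> \<le> s * \<epsilon>"
    using frechet_gradH_along_line[OF fg \<xi> h \<open>\<epsilon> > 0\<close>, of 1] by auto
  have seg: "(\<lambda>x. \<xi> x + s *\<^sub>R h x) = (\<lambda>x. (1 - s) *\<^sub>R \<xi> x + s *\<^sub>R \<zeta> x)"
    unfolding h_def by (simp add: algebra_simps)
  have "F (\<lambda>x. \<xi> x + s *\<^sub>R h x) \<le> (1 - s) * F \<xi> + s * F \<zeta> - lam / 2 * s * (1 - s) * (distH M \<xi> \<zeta>)^2"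
    using cv \<xi> \<zeta> s unfolding lambda_convexH_def seg by auto
  also have "\<dots> \<le> (1 - s) * F \<xi> + s * F \<zeta>"
    using \<open>lam \<ge> 0\<close> s by simp
  finally have "s * (F \<xi> + innerH M (G \<xi>) h) \<le> s * (F \<zeta> + \<epsilon>)"
    using lin by (simp add: algebra_simps)
  then show "F \<xi> + innerH M (G \<xi>) \<zeta> - innerH M (G \<xi>) \<xi> \<le> F \<zeta> + \<epsilon>"
    using s fg \<xi> \<zeta> unfolding h_def by (simp add: frechet_gradH_L2H)
qed

section \<open>The trapezoidal scheme\<close>

lemma trap_scheme_L2H: "trap_scheme M F G \<tau> X \<Longrightarrow> X n \<in> L2H M"
  unfolding trap_scheme_def by (cases n) auto

text \<open>v is the gradient of the functional minimised by X (Suc n), so moving the minimiser by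
  -s v changes that functional by -s innerH M v v + O(s^2) + o(s).\<close>

lemma trap_scheme_objective_along_residual:
  fixes n :: nat and s :: real
  assumes fg: "frechet_gradH M F G" and ts: "trap_scheme M F G \<tau> X" and "\<tau> > 0"
  defines "v \<equiv> \<lambda>x. (1/2) *\<^sub>R G (X (Suc n)) x + (1/2) *\<^sub>R G (X n) x + (1/\<tau>) *\<^sub>R (X (Suc n) x - X n x)"
  shows "s * innerH M v v - s^2 / (2 * \<tau>) * innerH M v v
    \<le> (F (\<lambda>x. X (Suc n) x - s *\<^sub>R v x) - F (X (Suc n)) + s * innerH M (G (X (Suc n))) v) / 2"
proof -
  define x\<^sub>0 x\<^sub>1 g\<^sub>0 g\<^sub>1
    where iterates: "x\<^sub>0 = X n" "x\<^sub>1 = X (Suc n)" "g\<^sub>0 = G (X n)" "g\<^sub>1 = G (X (Suc n))"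
  define u z N where "u = (\<lambda>x. x\<^sub>1 x - x\<^sub>0 x)" "z = (\<lambda>x. x\<^sub>1 x - s *\<^sub>R v x)" "N = innerH M v v"
  have L2H: "x\<^sub>0 \<in> L2H M" "x\<^sub>1 \<in> L2H M" "g\<^sub>0 \<in> L2H M" "g\<^sub>1 \<in> L2H M" "u \<in> L2H M" "v \<in> L2H M"
    "z \<in> L2H M"
    using trap_scheme_L2H[OF ts] frechet_gradH_L2H[OF fg]
    unfolding iterates u_z_N_def v_def by simp_all
  have N: "N = innerH M g\<^sub>1 v / 2 + innerH M g\<^sub>0 v / 2 + innerH M u v / \<tau>"
    using L2H unfolding u_z_N_def v_def iterates by simp
  have min: "F x\<^sub>1 / 2 + innerH M g\<^sub>0 x\<^sub>1 / 2 + (distH M x\<^sub>1 x\<^sub>0)^2 / (2 * \<tau>)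
         \<le> F z / 2 + innerH M g\<^sub>0 z / 2 + (distH M z x\<^sub>0)^2 / (2 * \<tau>)"
    using ts L2H(7) unfolding trap_scheme_def iterates by blast
  have g\<^sub>0z: "innerH M g\<^sub>0 z = innerH M g\<^sub>0 x\<^sub>1 - s * innerH M g\<^sub>0 v"
    unfolding u_z_N_def using L2H by simp
  have "(distH M z x\<^sub>0)^2 - (distH M x\<^sub>1 x\<^sub>0)^2 = s * (s * N - 2 * innerH M u v)"
  proof -
    have "(\<lambda>x. z x - x\<^sub>0 x) = (\<lambda>x. u x - s *\<^sub>R v x)" unfolding u_z_N_def by auto
    then show ?thesis
      unfolding distH_power2 u_z_N_def(3) using L2H
      by (simp add: innerH_commute[of M v u] u_z_N_def(1)[symmetric])
        (simp add: power2_eq_square algebra_simps)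
  qed
  then have dist: "(distH M z x\<^sub>0)^2 / (2 * \<tau>) - (distH M x\<^sub>1 x\<^sub>0)^2 / (2 * \<tau>)
      = s * (s * N - 2 * innerH M u v) / (2 * \<tau>)"
    by (simp only: diff_divide_distrib[symmetric])
  have "s * N - s^2 / (2 * \<tau>) * N
      = s * (innerH M g\<^sub>1 v / 2 + innerH M g\<^sub>0 v / 2 + innerH M u v / \<tau>) - s^2 / (2 * \<tau>) * N"
    unfolding N[symmetric] ..
  also have "\<dots> = s * innerH M g\<^sub>1 v / 2 - (s * (s * N - 2 * innerH M u v) / (2 * \<tau>)
      - s * innerH M g\<^sub>0 v / 2)"
    using \<open>\<tau> > 0\<close> by (simp add: field_simps power2_eq_square)
  also have "\<dots> \<le> (F z - F x\<^sub>1 + s * innerH M g\<^sub>1 v) / 2"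
    using min g\<^sub>0z dist by argo
  finally show ?thesis
    unfolding u_z_N_def iterates .
qed

lemma trap_scheme_residual_eq_0:
  fixes n :: nat
  assumes fg: "frechet_gradH M F G" and ts: "trap_scheme M F G \<tau> X" and "\<tau> > 0"
  defines "v \<equiv> \<lambda>x. (1/2) *\<^sub>R G (X (Suc n)) x + (1/2) *\<^sub>R G (X n) x + (1/\<tau>) *\<^sub>R (X (Suc n) x - X n x)"
  shows "innerH M v v = 0"
proof -
  have L2H: "X (Suc n) \<in> L2H M" "v \<in> L2H M"
    using trap_scheme_L2H[OF ts] frechet_gradH_L2H[OF fg] unfolding v_def by simp_all
  have "innerH M v v \<le> 0"
  proof (rule field_le_epsilon)
    fix \<epsilon> :: real assume "\<epsilon> > 0"
    obtain s where s: "0 < s" "s \<le> \<tau>" and lin: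
      "\<bar>F (\<lambda>x. X (Suc n) x + s *\<^sub>R (-1) *\<^sub>R v x) - F (X (Suc n))
         - s * innerH M (G (X (Suc n))) (\<lambda>x. (-1) *\<^sub>R v x)\<bar> \<le> s * \<epsilon>"
      using frechet_gradH_along_line[OF fg L2H(1) L2H_scaleR[OF L2H(2)] \<open>\<epsilon> > 0\<close> \<open>\<tau> > 0\<close>] by blast
    have "s * innerH M v v - s^2 / (2 * \<tau>) * innerH M v v \<le> s * \<epsilon> / 2"
      using trap_scheme_objective_along_residual[OF fg ts \<open>\<tau> > 0\<close>, of s n] lin
      unfolding v_def innerH_scaleR_right by (simp add: algebra_simps)
    moreover have "s^2 / (2 * \<tau>) * innerH M v v \<le> s / 2 * innerH M v v"
      using s \<open>\<tau> > 0\<close> innerH_self_nonneg[of M v]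
      by (intro mult_right_mono) (simp_all add: field_simps power2_eq_square)
    ultimately have "s * innerH M v v \<le> s * \<epsilon>"
      by linarith
    then show "innerH M v v \<le> 0 + \<epsilon>"
      using s by simp
  qed
  then show ?thesis
    using innerH_self_nonneg[of M v] by linarith
qed

lemma trap_scheme_euler_lagrange:
  assumes fg: "frechet_gradH M F G" and ts: "trap_scheme M F G \<tau> X" and "\<tau> > 0"
    and w: "w \<in> L2H M"
  shows "innerH M w (X n) - innerH M w (X (Suc n))
    = \<tau> / 2 * (innerH M w (G (X (Suc n))) + innerH M w (G (X n)))"
proof -
  define v where "v = (\<lambda>x. (1/2) *\<^sub>R G (X (Suc n)) x + (1/2) *\<^sub>R G (X n) x
    + (1/\<tau>) *\<^sub>R (X (Suc n) x - X n x))"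
  have L2H: "X n \<in> L2H M" "X (Suc n) \<in> L2H M" "G (X n) \<in> L2H M" "G (X (Suc n)) \<in> L2H M"
    using trap_scheme_L2H[OF ts] frechet_gradH_L2H[OF fg] by blast+
  have "v \<in> L2H M" unfolding v_def using L2H by simp
  moreover have "innerH M v v = 0"
    unfolding v_def by (rule trap_scheme_residual_eq_0[OF fg ts \<open>\<tau> > 0\<close>])
  ultimately have "innerH M v w = 0"
    using w innerH_eq_0_if_self_eq_0 by blast
  then have "innerH M (G (X (Suc n))) w / 2 + innerH M (G (X n)) w / 2
      = (innerH M (X n) w - innerH M (X (Suc n)) w) / \<tau>"
    using L2H w unfolding v_def by (simp add: diff_divide_distrib)
  then show ?thesis
    using \<open>\<tau> > 0\<close> by (simp add: innerH_commute[of M w] eq_divide_eq algebra_simps)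
qed

lemma trap_scheme_discrete_evi:
  assumes fg: "frechet_gradH M F G" and cv: "lambda_convexH M lam F" and lam: "lam \<ge> 0"
    and ts: "trap_scheme M F G \<tau> X" and "\<tau> > 0" and \<xi>: "\<xi> \<in> L2H M"
  shows "(distH M \<xi> (X (Suc n)))^2 - (distH M \<xi> (X n))^2
    \<le> \<tau> * (2 * F \<xi> - F (X n) - F (X (Suc n)))
       - \<tau>^2 / 4 * ((normH M (G (X (Suc n))))^2 - (normH M (G (X n)))^2)"
proof -
  define x\<^sub>0 x\<^sub>1 g\<^sub>0 g\<^sub>1
    where iterates: "x\<^sub>0 = X n" "x\<^sub>1 = X (Suc n)" "g\<^sub>0 = G (X n)" "g\<^sub>1 = G (X (Suc n))"
  have L2H: "x\<^sub>0 \<in> L2H M" "x\<^sub>1 \<in> L2H M" "g\<^sub>0 \<in> L2H M" "g\<^sub>1 \<in> L2H M"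
    using trap_scheme_L2H[OF ts] frechet_gradH_L2H[OF fg] unfolding iterates by blast+
  have EL: "innerH M w x\<^sub>0 - innerH M w x\<^sub>1 = \<tau> / 2 * (innerH M w g\<^sub>1 + innerH M w g\<^sub>0)"
    if "w \<in> L2H M" for w
    using trap_scheme_euler_lagrange[OF fg ts \<open>\<tau> > 0\<close> that] unfolding iterates .
  have "(distH M \<xi> x\<^sub>1)^2 - (distH M \<xi> x\<^sub>0)^2
      = 2 * (innerH M \<xi> x\<^sub>0 - innerH M \<xi> x\<^sub>1) - (innerH M x\<^sub>1 x\<^sub>0 - innerH M x\<^sub>1 x\<^sub>1)
        - (innerH M x\<^sub>0 x\<^sub>0 - innerH M x\<^sub>0 x\<^sub>1)"
    unfolding distH_power2 using L2H \<xi>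
    by (simp add: innerH_commute[of M x\<^sub>0 \<xi>] innerH_commute[of M x\<^sub>1 \<xi>]
      innerH_commute[of M x\<^sub>0 x\<^sub>1])
  also have "\<dots> = \<tau> * (innerH M \<xi> g\<^sub>1 + innerH M \<xi> g\<^sub>0) - \<tau> / 2 * (innerH M x\<^sub>1 g\<^sub>1 + innerH M x\<^sub>1 g\<^sub>0)
      - \<tau> / 2 * (innerH M x\<^sub>0 g\<^sub>1 + innerH M x\<^sub>0 g\<^sub>0)"
    using EL[OF \<xi>] EL[OF L2H(1)] EL[OF L2H(2)] by simp
  also have "\<dots> = \<tau> * (innerH M g\<^sub>1 \<xi> - innerH M g\<^sub>1 x\<^sub>1) + \<tau> * (innerH M g\<^sub>0 \<xi> - innerH M g\<^sub>0 x\<^sub>0)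
      - \<tau> / 2 * ((innerH M g\<^sub>1 x\<^sub>0 - innerH M g\<^sub>1 x\<^sub>1) - (innerH M g\<^sub>0 x\<^sub>0 - innerH M g\<^sub>0 x\<^sub>1))"
    by (simp add: innerH_commute[of M g\<^sub>1] innerH_commute[of M g\<^sub>0] algebra_simps)
  also have "\<dots> = \<tau> * (innerH M g\<^sub>1 \<xi> - innerH M g\<^sub>1 x\<^sub>1) + \<tau> * (innerH M g\<^sub>0 \<xi> - innerH M g\<^sub>0 x\<^sub>0)
      - \<tau>^2 / 4 * (innerH M g\<^sub>1 g\<^sub>1 - innerH M g\<^sub>0 g\<^sub>0)"
    using EL[OF L2H(3)] EL[OF L2H(4)]
    by (simp add: innerH_commute[of M g\<^sub>0 g\<^sub>1]) (simp add: power2_eq_square algebra_simps)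
  also have "\<dots> \<le> \<tau> * (F \<xi> - F x\<^sub>1) + \<tau> * (F \<xi> - F x\<^sub>0)
      - \<tau>^2 / 4 * (innerH M g\<^sub>1 g\<^sub>1 - innerH M g\<^sub>0 g\<^sub>0)"
  proof -
    have "innerH M g\<^sub>1 \<xi> - innerH M g\<^sub>1 x\<^sub>1 \<le> F \<xi> - F x\<^sub>1"
      using lambda_convexH_gradient_ineq[OF fg cv lam L2H(2) \<xi>] unfolding iterates by simp
    moreover have "innerH M g\<^sub>0 \<xi> - innerH M g\<^sub>0 x\<^sub>0 \<le> F \<xi> - F x\<^sub>0"
      using lambda_convexH_gradient_ineq[OF fg cv lam L2H(1) \<xi>] unfolding iterates by simp
    ultimately show ?thesis
      using \<open>\<tau> > 0\<close> by (simp add: add_mono mult_left_mono)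
  qed
  finally show ?thesis
    unfolding normH_power2 iterates by (simp add: algebra_simps)
qed

lemma trap_scheme_descent:
  assumes fg: "frechet_gradH M F G" and cv: "lambda_convexH M lam F" and lam: "lam \<ge> 0"
    and ts: "trap_scheme M F G \<tau> X" and "\<tau> > 0"
  shows "(normH M (G (X (Suc n))))^2 \<le> (normH M (G (X n)))^2"
    and "F (X n) - F (X (Suc n)) \<le> \<tau> * (normH M (G (X n)))^2"
proof -
  define x\<^sub>0 x\<^sub>1 g\<^sub>0 g\<^sub>1
    where iterates: "x\<^sub>0 = X n" "x\<^sub>1 = X (Suc n)" "g\<^sub>0 = G (X n)" "g\<^sub>1 = G (X (Suc n))"
  have L2H: "x\<^sub>0 \<in> L2H M" "x\<^sub>1 \<in> L2H M" "g\<^sub>0 \<in> L2H M" "g\<^sub>1 \<in> L2H M"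
    using trap_scheme_L2H[OF ts] frechet_gradH_L2H[OF fg] unfolding iterates by blast+
  have EL\<^sub>1: "innerH M g\<^sub>1 x\<^sub>0 - innerH M g\<^sub>1 x\<^sub>1 = \<tau> / 2 * (innerH M g\<^sub>1 g\<^sub>1 + innerH M g\<^sub>0 g\<^sub>1)"
    and EL\<^sub>0: "innerH M g\<^sub>0 x\<^sub>0 - innerH M g\<^sub>0 x\<^sub>1 = \<tau> / 2 * (innerH M g\<^sub>0 g\<^sub>1 + innerH M g\<^sub>0 g\<^sub>0)"
    using trap_scheme_euler_lagrange[OF fg ts \<open>\<tau> > 0\<close>] L2H
    unfolding iterates by (simp_all add: innerH_commute[of M "G (X (Suc n))" "G (X n)"])
  have conv\<^sub>1: "F x\<^sub>1 + innerH M g\<^sub>1 x\<^sub>0 - innerH M g\<^sub>1 x\<^sub>1 \<le> F x\<^sub>0"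
    and conv\<^sub>0: "F x\<^sub>0 + innerH M g\<^sub>0 x\<^sub>1 - innerH M g\<^sub>0 x\<^sub>0 \<le> F x\<^sub>1"
    using lambda_convexH_gradient_ineq[OF fg cv lam] L2H unfolding iterates by blast+
  have "\<tau> / 2 * (innerH M g\<^sub>1 g\<^sub>1 - innerH M g\<^sub>0 g\<^sub>0)
      = (innerH M g\<^sub>1 x\<^sub>0 - innerH M g\<^sub>1 x\<^sub>1) - (innerH M g\<^sub>0 x\<^sub>0 - innerH M g\<^sub>0 x\<^sub>1)"
    unfolding EL\<^sub>1 EL\<^sub>0 by (simp add: algebra_simps)
  also have "\<dots> \<le> 0"
    using conv\<^sub>1 conv\<^sub>0 by linarith
  finally have decay: "innerH M g\<^sub>1 g\<^sub>1 \<le> innerH M g\<^sub>0 g\<^sub>0"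
    using \<open>\<tau> > 0\<close> by (simp add: mult_le_0_iff)
  then show "(normH M (G (X (Suc n))))^2 \<le> (normH M (G (X n)))^2"
    unfolding normH_power2 iterates .
  have "0 \<le> innerH M (\<lambda>x. g\<^sub>0 x - g\<^sub>1 x) (\<lambda>x. g\<^sub>0 x - g\<^sub>1 x)"
    by (rule innerH_self_nonneg)
  then have cross: "innerH M g\<^sub>0 g\<^sub>1 \<le> innerH M g\<^sub>0 g\<^sub>0"
    using L2H decay by (simp add: innerH_commute[of M g\<^sub>1 g\<^sub>0])
  have "F x\<^sub>0 - F x\<^sub>1 \<le> innerH M g\<^sub>0 x\<^sub>0 - innerH M g\<^sub>0 x\<^sub>1"
    using conv\<^sub>0 by linarith
  also have "\<dots> \<le> \<tau> * innerH M g\<^sub>0 g\<^sub>0"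
    unfolding EL\<^sub>0 using cross \<open>\<tau> > 0\<close> by simp
  finally show "F (X n) - F (X (Suc n)) \<le> \<tau> * (normH M (G (X n)))^2"
    unfolding normH_power2 iterates .
qed

section \<open>Interpolation between two schemes\<close>

definition bilinear_interp :: "real \<Rightarrow> real \<Rightarrow> real \<Rightarrow> real \<Rightarrow> real \<Rightarrow> real \<Rightarrow> real" where
  "bilinear_interp c\<^sub>0\<^sub>0 c\<^sub>1\<^sub>0 c\<^sub>0\<^sub>1 c\<^sub>1\<^sub>1 a b
    = (1 - b) * ((1 - a) * c\<^sub>0\<^sub>0 + a * c\<^sub>1\<^sub>0) + b * ((1 - a) * c\<^sub>0\<^sub>1 + a * c\<^sub>1\<^sub>1)"

text \<open>With g the initial squared gradient norm, the correction vanishes at time 0 and agrees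
  across cell boundaries (a = 1 here, a = 0 in the next cell); its growth absorbs the growth of
  the bilinear interpolant allowed by the discrete EVIs.\<close>

definition evi_correction :: "real \<Rightarrow> real \<Rightarrow> real \<Rightarrow> real \<Rightarrow> real \<Rightarrow> real \<Rightarrow> real \<Rightarrow> real" where
  "evi_correction \<tau> f\<^sub>0 f\<^sub>1 g g\<^sub>0 g\<^sub>1 a = \<tau> * a * (1 - a) * (f\<^sub>0 - f\<^sub>1) + \<tau>^2 / 4 * (g - (1 - a) * g\<^sub>0 - a * g\<^sub>1)"

lemma evi_correction_le:
  fixes \<tau> f\<^sub>0 f\<^sub>1 g g\<^sub>0 g\<^sub>1 a :: real
  assumes "\<tau> > 0" "0 \<le> a" "a \<le> 1" "f\<^sub>0 - f\<^sub>1 \<le> \<tau> * g\<^sub>0" "0 \<le> g\<^sub>0" "g\<^sub>0 \<le> g" "0 \<le> g\<^sub>1"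
  shows "evi_correction \<tau> f\<^sub>0 f\<^sub>1 g g\<^sub>0 g\<^sub>1 a \<le> \<tau>^2 / 2 * g"
proof -
  have "0 \<le> (2 * a - 1)^2" by simp
  then have quarter: "a * (1 - a) \<le> 1 / 4"
    by (simp add: power2_eq_square algebra_simps)
  have "\<tau> * a * (1 - a) * (f\<^sub>0 - f\<^sub>1) \<le> \<tau> * a * (1 - a) * (\<tau> * g\<^sub>0)"
    using assms by (intro mult_left_mono) simp_all
  also have "\<dots> = \<tau>^2 * g\<^sub>0 * (a * (1 - a))"
    by (simp add: power2_eq_square algebra_simps)
  also have "\<dots> \<le> \<tau>^2 * g * (1 / 4)"
    using assms quarter by (intro mult_mono) simp_all
  finally have "\<tau> * a * (1 - a) * (f\<^sub>0 - f\<^sub>1) \<le> \<tau>^2 / 4 * g" by simp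
  moreover have "\<tau>^2 / 4 * (g - (1 - a) * g\<^sub>0 - a * g\<^sub>1) \<le> \<tau>^2 / 4 * g"
  proof (rule mult_left_mono)
    have "0 \<le> (1 - a) * g\<^sub>0" "0 \<le> a * g\<^sub>1"
      using assms by simp_all
    then show "g - (1 - a) * g\<^sub>0 - a * g\<^sub>1 \<le> g" by linarith
  qed simp
  ultimately show ?thesis
    unfolding evi_correction_def by simp
qed

lemma bilinear_interp_diagonal_antimono:
  fixes \<tau> \<eta> d a b c\<^sub>0\<^sub>0 c\<^sub>1\<^sub>0 c\<^sub>0\<^sub>1 c\<^sub>1\<^sub>1 f\<^sub>0 f\<^sub>1 h\<^sub>0 h\<^sub>1 g\<^sub>0 g\<^sub>1 k\<^sub>0 k\<^sub>1 g k :: real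
  assumes "\<tau> > 0" "\<eta> > 0" "d \<ge> 0"
    and a: "0 \<le> a" "a + d / \<tau> \<le> 1" and b: "0 \<le> b" "b + d / \<eta> \<le> 1"
    and evi\<^sub>0\<^sub>0: "c\<^sub>1\<^sub>0 - c\<^sub>0\<^sub>0 \<le> \<tau> * (2 * h\<^sub>0 - f\<^sub>0 - f\<^sub>1) - \<tau>^2 / 4 * (g\<^sub>1 - g\<^sub>0)"
    and evi\<^sub>0\<^sub>1: "c\<^sub>1\<^sub>1 - c\<^sub>0\<^sub>1 \<le> \<tau> * (2 * h\<^sub>1 - f\<^sub>0 - f\<^sub>1) - \<tau>^2 / 4 * (g\<^sub>1 - g\<^sub>0)"
    and evi\<^sub>1\<^sub>0: "c\<^sub>0\<^sub>1 - c\<^sub>0\<^sub>0 \<le> \<eta> * (2 * f\<^sub>0 - h\<^sub>0 - h\<^sub>1) - \<eta>^2 / 4 * (k\<^sub>1 - k\<^sub>0)"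
    and evi\<^sub>1\<^sub>1: "c\<^sub>1\<^sub>1 - c\<^sub>1\<^sub>0 \<le> \<eta> * (2 * f\<^sub>1 - h\<^sub>0 - h\<^sub>1) - \<eta>^2 / 4 * (k\<^sub>1 - k\<^sub>0)"
  shows "bilinear_interp c\<^sub>0\<^sub>0 c\<^sub>1\<^sub>0 c\<^sub>0\<^sub>1 c\<^sub>1\<^sub>1 (a + d / \<tau>) (b + d / \<eta>)
           - evi_correction \<tau> f\<^sub>0 f\<^sub>1 g g\<^sub>0 g\<^sub>1 (a + d / \<tau>) - evi_correction \<eta> h\<^sub>0 h\<^sub>1 k k\<^sub>0 k\<^sub>1 (b + d / \<eta>)
         \<le> bilinear_interp c\<^sub>0\<^sub>0 c\<^sub>1\<^sub>0 c\<^sub>0\<^sub>1 c\<^sub>1\<^sub>1 a b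
           - evi_correction \<tau> f\<^sub>0 f\<^sub>1 g g\<^sub>0 g\<^sub>1 a - evi_correction \<eta> h\<^sub>0 h\<^sub>1 k k\<^sub>0 k\<^sub>1 b"
proof -
  define a' b' where "a' = a + d / (2 * \<tau>)" "b' = b + d / (2 * \<eta>)"
  define gap\<^sub>0\<^sub>0 gap\<^sub>0\<^sub>1 gap\<^sub>1\<^sub>0 gap\<^sub>1\<^sub>1 where gaps:
    "gap\<^sub>0\<^sub>0 = \<tau> * (2 * h\<^sub>0 - f\<^sub>0 - f\<^sub>1) - \<tau>^2 / 4 * (g\<^sub>1 - g\<^sub>0) - (c\<^sub>1\<^sub>0 - c\<^sub>0\<^sub>0)"
    "gap\<^sub>0\<^sub>1 = \<tau> * (2 * h\<^sub>1 - f\<^sub>0 - f\<^sub>1) - \<tau>^2 / 4 * (g\<^sub>1 - g\<^sub>0) - (c\<^sub>1\<^sub>1 - c\<^sub>0\<^sub>1)"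
    "gap\<^sub>1\<^sub>0 = \<eta> * (2 * f\<^sub>0 - h\<^sub>0 - h\<^sub>1) - \<eta>^2 / 4 * (k\<^sub>1 - k\<^sub>0) - (c\<^sub>0\<^sub>1 - c\<^sub>0\<^sub>0)"
    "gap\<^sub>1\<^sub>1 = \<eta> * (2 * f\<^sub>1 - h\<^sub>0 - h\<^sub>1) - \<eta>^2 / 4 * (k\<^sub>1 - k\<^sub>0) - (c\<^sub>1\<^sub>1 - c\<^sub>1\<^sub>0)"
  have "(bilinear_interp c\<^sub>0\<^sub>0 c\<^sub>1\<^sub>0 c\<^sub>0\<^sub>1 c\<^sub>1\<^sub>1 a b
           - evi_correction \<tau> f\<^sub>0 f\<^sub>1 g g\<^sub>0 g\<^sub>1 a - evi_correction \<eta> h\<^sub>0 h\<^sub>1 k k\<^sub>0 k\<^sub>1 b)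
        - (bilinear_interp c\<^sub>0\<^sub>0 c\<^sub>1\<^sub>0 c\<^sub>0\<^sub>1 c\<^sub>1\<^sub>1 (a + d / \<tau>) (b + d / \<eta>)
           - evi_correction \<tau> f\<^sub>0 f\<^sub>1 g g\<^sub>0 g\<^sub>1 (a + d / \<tau>) - evi_correction \<eta> h\<^sub>0 h\<^sub>1 k k\<^sub>0 k\<^sub>1 (b + d / \<eta>))
      = d / \<tau> * ((1 - b') * gap\<^sub>0\<^sub>0 + b' * gap\<^sub>0\<^sub>1) + d / \<eta> * ((1 - a') * gap\<^sub>1\<^sub>0 + a' * gap\<^sub>1\<^sub>1)"
    using \<open>\<tau> > 0\<close> \<open>\<eta> > 0\<close> unfolding bilinear_interp_def evi_correction_def a'_b'_def gaps
    by (simp add: field_simps power2_eq_square)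
  moreover have "0 \<le> d / \<tau> * ((1 - b') * gap\<^sub>0\<^sub>0 + b' * gap\<^sub>0\<^sub>1)"
    and "0 \<le> d / \<eta> * ((1 - a') * gap\<^sub>1\<^sub>0 + a' * gap\<^sub>1\<^sub>1)"
  proof -
    have "0 \<le> gap\<^sub>0\<^sub>0" "0 \<le> gap\<^sub>0\<^sub>1" "0 \<le> gap\<^sub>1\<^sub>0" "0 \<le> gap\<^sub>1\<^sub>1"
      using evi\<^sub>0\<^sub>0 evi\<^sub>0\<^sub>1 evi\<^sub>1\<^sub>0 evi\<^sub>1\<^sub>1 unfolding gaps by simp_all
    moreover have "0 \<le> a'" "a' \<le> 1" "0 \<le> b'" "b' \<le> 1"
      using a b \<open>\<tau> > 0\<close> \<open>\<eta> > 0\<close> \<open>d \<ge> 0\<close> unfolding a'_b'_def by (simp_all add: field_simps)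
    ultimately show "0 \<le> d / \<tau> * ((1 - b') * gap\<^sub>0\<^sub>0 + b' * gap\<^sub>0\<^sub>1)"
      and "0 \<le> d / \<eta> * ((1 - a') * gap\<^sub>1\<^sub>0 + a' * gap\<^sub>1\<^sub>1)"
      using \<open>\<tau> > 0\<close> \<open>\<eta> > 0\<close> \<open>d \<ge> 0\<close> by (simp_all add: add_nonneg_nonneg)
  qed
  ultimately show ?thesis by linarith
qed

lemma nat_floor_divide_bounds:
  fixes s u :: real
  assumes "0 \<le> s" "0 < u"
  shows "real (nat \<lfloor>s / u\<rfloor>) * u \<le> s" and "s \<le> (real (nat \<lfloor>s / u\<rfloor>) + 1) * u"
proof -
  have n: "real (nat \<lfloor>s / u\<rfloor>) = of_int \<lfloor>s / u\<rfloor>"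
    using assms by simp
  have "of_int \<lfloor>s / u\<rfloor> * u \<le> s / u * u"
    using \<open>0 < u\<close> by (intro mult_right_mono) simp_all
  then show "real (nat \<lfloor>s / u\<rfloor>) * u \<le> s"
    using \<open>0 < u\<close> n by simp
  have "s / u * u \<le> (of_int \<lfloor>s / u\<rfloor> + 1) * u"
    using \<open>0 < u\<close> by (intro mult_right_mono) linarith+
  then show "s \<le> (real (nat \<lfloor>s / u\<rfloor>) + 1) * u"
    using \<open>0 < u\<close> n by simp
qed

text \<open>The grid of two schemes: c n m is |Y m - X n|^2, FX n and GX n are \<phi>(X n) and
  |\<nabla>\<phi>(X n)|^2 (likewise FY, GY), and the assumptions are the two discrete EVIs.\<close>

locale evi_grid =
  fixes \<tau> \<eta> :: real and c :: "nat \<Rightarrow> nat \<Rightarrow> real" and FX FY GX GY :: "nat \<Rightarrow> real"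
  assumes \<tau>_pos: "\<tau> > 0" and \<eta>_pos: "\<eta> > 0"
    and evi_X: "\<And>n m. c (Suc n) m - c n m
      \<le> \<tau> * (2 * FY m - FX n - FX (Suc n)) - \<tau>^2 / 4 * (GX (Suc n) - GX n)"
    and evi_Y: "\<And>n m. c n (Suc m) - c n m
      \<le> \<eta> * (2 * FX n - FY m - FY (Suc m)) - \<eta>^2 / 4 * (GY (Suc m) - GY m)"
begin

definition in_cell :: "nat \<Rightarrow> nat \<Rightarrow> real \<Rightarrow> bool" where
  "in_cell n m s \<longleftrightarrow>
     real n * \<tau> \<le> s \<and> s \<le> (real n + 1) * \<tau> \<and> real m * \<eta> \<le> s \<and> s \<le> (real m + 1) * \<eta>"

definition lyapunov :: "nat \<Rightarrow> nat \<Rightarrow> real \<Rightarrow> real" where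
  "lyapunov n m s =
     bilinear_interp (c n m) (c (Suc n) m) (c n (Suc m)) (c (Suc n) (Suc m))
       ((s - real n * \<tau>) / \<tau>) ((s - real m * \<eta>) / \<eta>)
     - evi_correction \<tau> (FX n) (FX (Suc n)) (GX 0) (GX n) (GX (Suc n)) ((s - real n * \<tau>) / \<tau>)
     - evi_correction \<eta> (FY m) (FY (Suc m)) (GY 0) (GY m) (GY (Suc m)) ((s - real m * \<eta>) / \<eta>)"

lemma lyapunov_antimono:
  assumes "in_cell n m s\<^sub>0" "in_cell n m s\<^sub>1" "s\<^sub>0 \<le> s\<^sub>1"
  shows "lyapunov n m s\<^sub>1 \<le> lyapunov n m s\<^sub>0"
proof -
  define d where "d = s\<^sub>1 - s\<^sub>0"
  have "(s\<^sub>1 - real n * \<tau>) / \<tau> = (s\<^sub>0 - real n * \<tau>) / \<tau> + d / \<tau>"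
    and "(s\<^sub>1 - real m * \<eta>) / \<eta> = (s\<^sub>0 - real m * \<eta>) / \<eta> + d / \<eta>"
    unfolding d_def by (simp_all add: diff_divide_distrib)
  moreover have "0 \<le> (s\<^sub>0 - real n * \<tau>) / \<tau>" "(s\<^sub>0 - real n * \<tau>) / \<tau> + d / \<tau> \<le> 1"
    and "0 \<le> (s\<^sub>0 - real m * \<eta>) / \<eta>" "(s\<^sub>0 - real m * \<eta>) / \<eta> + d / \<eta> \<le> 1"
    using assms \<tau>_pos \<eta>_pos unfolding in_cell_def d_def by (auto simp: field_simps)
  ultimately show ?thesis
    unfolding lyapunov_def
    using bilinear_interp_diagonal_antimono[OF \<tau>_pos \<eta>_pos _ _ _ _ _ evi_X evi_X evi_Y evi_Y] assms(3)
    unfolding d_def by simp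
qed

lemma lyapunov_Suc_left: "lyapunov (Suc n) m (real (Suc n) * \<tau>) = lyapunov n m (real (Suc n) * \<tau>)"
  using \<tau>_pos unfolding lyapunov_def bilinear_interp_def evi_correction_def by (simp add: field_simps)

lemma lyapunov_Suc_right: "lyapunov n (Suc m) (real (Suc m) * \<eta>) = lyapunov n m (real (Suc m) * \<eta>)"
  using \<eta>_pos unfolding lyapunov_def bilinear_interp_def evi_correction_def by (simp add: field_simps)

lemma lyapunov_le_initial: "in_cell n m s \<Longrightarrow> lyapunov n m s \<le> c 0 0"
proof (induction "n + m" arbitrary: n m s rule: less_induct)
  case less
  define s\<^sub>0 where "s\<^sub>0 = max (real n * \<tau>) (real m * \<eta>)"
  have cell: "in_cell n m s\<^sub>0" and "s\<^sub>0 \<le> s"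
    using less.prems unfolding in_cell_def s\<^sub>0_def by auto
  then have "lyapunov n m s \<le> lyapunov n m s\<^sub>0"
    using less.prems by (intro lyapunov_antimono)
  also have "lyapunov n m s\<^sub>0 \<le> c 0 0"
  proof -
    consider (origin) "n = 0" "m = 0"
      | (left) k where "n = Suc k" "s\<^sub>0 = real n * \<tau>"
      | (down) k where "m = Suc k" "s\<^sub>0 = real m * \<eta>"
    proof (cases "real m * \<eta> \<le> real n * \<tau>")
      case True
      then have "s\<^sub>0 = real n * \<tau>" unfolding s\<^sub>0_def by simp
      moreover have "n = 0 \<Longrightarrow> m = 0" using True \<eta>_pos by (simp add: mult_le_0_iff)
      ultimately show ?thesis using that by (cases n) auto
    next
      case False
      then have "s\<^sub>0 = real m * \<eta>" unfolding s\<^sub>0_def by simp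
      moreover have "m \<noteq> 0"
      proof
        assume "m = 0"
        then show False using False \<tau>_pos by simp
      qed
      ultimately show ?thesis using that by (cases m) auto
    qed
    then show ?thesis
    proof cases
      case origin
      then show ?thesis
        unfolding s\<^sub>0_def lyapunov_def bilinear_interp_def evi_correction_def by simp
    next
      case (left k)
      then have "in_cell k m s\<^sub>0"
        using cell unfolding in_cell_def by (auto simp: algebra_simps)
      then show ?thesis
        using less.hyps[of k m s\<^sub>0] lyapunov_Suc_left[of k m] left by simp
    next
      case (down k)
      then have "in_cell n k s\<^sub>0"
        using cell unfolding in_cell_def by (auto simp: algebra_simps)
      then show ?thesis
        using less.hyps[of n k s\<^sub>0] lyapunov_Suc_right[of n k] down by simp
    qed
  qed
  finally show ?case .
qed

lemma lyapunov_floor_le_initial: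
  assumes "0 \<le> s"
  shows "lyapunov (nat \<lfloor>s / \<tau>\<rfloor>) (nat \<lfloor>s / \<eta>\<rfloor>) s \<le> c 0 0"
  using nat_floor_divide_bounds[OF assms \<tau>_pos] nat_floor_divide_bounds[OF assms \<eta>_pos]
  by (intro lyapunov_le_initial) (simp add: in_cell_def)

end

lemma trap_scheme_gradient_norm_le_initial:
  assumes "frechet_gradH M F G" "lambda_convexH M lam F" "lam \<ge> 0" "trap_scheme M F G \<tau> X" "\<tau> > 0"
  shows "(normH M (G (X k)))^2 \<le> (normH M (G (X 0)))^2"
proof -
  have "decseq (\<lambda>k. (normH M (G (X k)))^2)"
    using trap_scheme_descent(1)[OF assms] by (rule decseq_SucI)
  then show ?thesis
    using decseqD[of _ 0 k] by blast
qed

lemma trap_schemes_evi_grid: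
  assumes fg: "frechet_gradH M F G" and cv: "lambda_convexH M lam F" and lam: "lam \<ge> 0"
    and tsX: "trap_scheme M F G \<tau> X" and tsY: "trap_scheme M F G \<eta> Y"
    and "\<tau> > 0" and "\<eta> > 0"
  shows "evi_grid \<tau> \<eta> (\<lambda>n m. (distH M (Y m) (X n))^2) (\<lambda>n. F (X n)) (\<lambda>n. F (Y n))
    (\<lambda>n. (normH M (G (X n)))^2) (\<lambda>n. (normH M (G (Y n)))^2)"
proof
  fix n m
  show "(distH M (Y m) (X (Suc n)))^2 - (distH M (Y m) (X n))^2
    \<le> \<tau> * (2 * F (Y m) - F (X n) - F (X (Suc n)))
       - \<tau>^2 / 4 * ((normH M (G (X (Suc n))))^2 - (normH M (G (X n)))^2)"
    using trap_scheme_discrete_evi[OF fg cv lam tsX \<open>\<tau> > 0\<close> trap_scheme_L2H[OF tsY]] .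
  show "(distH M (Y (Suc m)) (X n))^2 - (distH M (Y m) (X n))^2
    \<le> \<eta> * (2 * F (X n) - F (Y m) - F (Y (Suc m)))
       - \<eta>^2 / 4 * ((normH M (G (Y (Suc m))))^2 - (normH M (G (Y m)))^2)"
    using trap_scheme_discrete_evi[OF fg cv lam tsY \<open>\<eta> > 0\<close> trap_scheme_L2H[OF tsX]]
    by (simp add: distH_commute[of M "Y m"] distH_commute[of M "Y (Suc m)"])
qed (use \<open>\<tau> > 0\<close> \<open>\<eta> > 0\<close> in auto)

lemma trap_scheme_d2_two_le:
  assumes fg: "frechet_gradH M F G" and cv: "lambda_convexH M lam F" and lam: "lam \<ge> 0"
    and tsX: "trap_scheme M F G \<tau> X" and tsY: "trap_scheme M F G \<eta> Y"
    and "\<tau> > 0" and "\<eta> > 0" and "t \<ge> 0"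
  shows "d2_two M X \<tau> Y \<eta> t \<le> (distH M (X 0) (Y 0))^2
    + (\<tau>^2 * (normH M (G (X 0)))^2 + \<eta>^2 * (normH M (G (Y 0)))^2) / 2"
proof -
  define c FX FY GX GY
    where "c = (\<lambda>n m. (distH M (Y m) (X n))^2)" "FX = (\<lambda>n. F (X n))" "FY = (\<lambda>n. F (Y n))"
      "GX = (\<lambda>n. (normH M (G (X n)))^2)" "GY = (\<lambda>n. (normH M (G (Y n)))^2)"
  note grid_defs = c_FX_FY_GX_GY_def
  interpret evi_grid \<tau> \<eta> c FX FY GX GY
    unfolding grid_defs by (rule trap_schemes_evi_grid[OF fg cv lam tsX tsY \<open>\<tau> > 0\<close> \<open>\<eta> > 0\<close>])
  define n m a b where "n = stepidx \<tau> t" "m = stepidx \<eta> t" "a = ell \<tau> t" "b = ell \<eta> t"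
  have ab: "0 \<le> a" "a \<le> 1" "0 \<le> b" "b \<le> 1"
    using nat_floor_divide_bounds[OF \<open>t \<ge> 0\<close> \<open>\<tau> > 0\<close>] nat_floor_divide_bounds[OF \<open>t \<ge> 0\<close> \<open>\<eta> > 0\<close>]
      \<open>\<tau> > 0\<close> \<open>\<eta> > 0\<close>
    unfolding n_m_a_b_def ell_def stepidx_def by (simp_all add: field_simps)
  have "d2_two M X \<tau> Y \<eta> t = bilinear_interp (c n m) (c (Suc n) m) (c n (Suc m)) (c (Suc n) (Suc m)) a b"
    unfolding d2_two_def d2_def lowerX_def upperX_def bilinear_interp_def grid_defs n_m_a_b_def
    by (simp add: distH_commute)
  also have "\<dots> = lyapunov n m t
      + evi_correction \<tau> (FX n) (FX (Suc n)) (GX 0) (GX n) (GX (Suc n)) a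
      + evi_correction \<eta> (FY m) (FY (Suc m)) (GY 0) (GY m) (GY (Suc m)) b"
    unfolding lyapunov_def n_m_a_b_def ell_def by simp
  also have "\<dots> \<le> c 0 0 + \<tau>^2 / 2 * GX 0 + \<eta>^2 / 2 * GY 0"
  proof (intro add_mono)
    show "lyapunov n m t \<le> c 0 0"
      unfolding n_m_a_b_def stepidx_def using lyapunov_floor_le_initial[OF \<open>t \<ge> 0\<close>] .
    show "evi_correction \<tau> (FX n) (FX (Suc n)) (GX 0) (GX n) (GX (Suc n)) a \<le> \<tau>^2 / 2 * GX 0"
      using trap_scheme_descent(2)[OF fg cv lam tsX \<open>\<tau> > 0\<close>] \<open>\<tau> > 0\<close> ab
        trap_scheme_gradient_norm_le_initial[OF fg cv lam tsX \<open>\<tau> > 0\<close>]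
      unfolding grid_defs by (intro evi_correction_le) simp_all
    show "evi_correction \<eta> (FY m) (FY (Suc m)) (GY 0) (GY m) (GY (Suc m)) b \<le> \<eta>^2 / 2 * GY 0"
      using trap_scheme_descent(2)[OF fg cv lam tsY \<open>\<eta> > 0\<close>] \<open>\<eta> > 0\<close> ab
        trap_scheme_gradient_norm_le_initial[OF fg cv lam tsY \<open>\<eta> > 0\<close>]
      unfolding grid_defs by (intro evi_correction_le) simp_all
  qed
  finally show ?thesis
    unfolding grid_defs by (simp add: distH_commute[of M "Y 0"] add_divide_distrib)
qed

theorem mainTheorem12:
  fixes \<rho>0 :: "(real ^ 'd) measure"
    and \<phi> :: "(real ^ 'd) measure \<Rightarrow> real"
    and G :: "((real ^ 'd) \<Rightarrow> (real ^ 'd)) \<Rightarrow> ((real ^ 'd) \<Rightarrow> (real ^ 'd))"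
    and lam \<tau> \<eta> t :: real
    and X Y :: "nat \<Rightarrow> (real ^ 'd) \<Rightarrow> (real ^ 'd)"
  assumes "\<rho>0 \<in> P2"
    and "frechet_gradH \<rho>0 (lift \<phi> \<rho>0) G"
    and "lambda_convexH \<rho>0 lam (lift \<phi> \<rho>0)"
    and "lam \<ge> 0"
    and "bdd_below (lift \<phi> \<rho>0 ` L2H \<rho>0)"
    and "\<tau> > 0" and "\<eta> > 0"
    and "lam / 2 + 1 / \<tau> > 0" and "lam / 2 + 1 / \<eta> > 0"
    and "trap_scheme \<rho>0 (lift \<phi> \<rho>0) G \<tau> X"
    and "trap_scheme \<rho>0 (lift \<phi> \<rho>0) G \<eta> Y"
    and "t \<ge> 0"
  shows "d2_two \<rho>0 X \<tau> Y \<eta> t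
           \<le> (distH \<rho>0 (X 0) (Y 0))^2
              + 7 / 4 * (\<tau>^2 * (normH \<rho>0 (G (X 0)))^2 + \<eta>^2 * (normH \<rho>0 (G (Y 0)))^2)"
proof -
  let ?S = "\<tau>^2 * (normH \<rho>0 (G (X 0)))^2 + \<eta>^2 * (normH \<rho>0 (G (Y 0)))^2"
  have "d2_two \<rho>0 X \<tau> Y \<eta> t \<le> (distH \<rho>0 (X 0) (Y 0))^2 + ?S / 2"
    by (rule trap_scheme_d2_two_le[OF assms(2-4,10,11,6,7,12)])
  also have "\<dots> \<le> (distH \<rho>0 (X 0) (Y 0))^2 + 7 / 4 * ?S"
    by simp
  finally show ?thesis .
qed

end
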